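(* Let $q>1$ and $0<u<1$. For every $N\ge0$ and every partition $\lambda$, the probability that the Young Tableau Algorithm has produced the partition $\lambda$ at the end of interval $N$ equals $P^N_{x,y,0,1/q}(\lambda)$, where $x=(u/q,u/q^2,\dots)$ and $y=(1,1/q,1/q^2,\dots)$; explicitly this is $0$ if $\lambda$ has more than $N$ parts and otherwise $$\frac{u^{|\lambda|}\,(u/q)_N\,(1/q)_N}{(1/q)_{N-\lambda'_1}}\prod_{i\ge1}\frac{1}{q^{(\lambda'_i)^2}(1/q)_{m_i(\lambda)}}.$$
   Context: $(a)_N=(1-a)(1-a/q)\cdots(1-a/q^{N-1})$, $(a)_0=1$. $\lambda'_s$ is the length of column $s$ of $\lambda$ ($0$ if empty); $m_i(\lambda)$ is the number of parts equal to $i$. $P^N_{x,y,0,t}(\lambda)=\frac{P_\lambda(x_1,\dots,x_N,0,\dots;0,t)P_\lambda(y;0,t)b_\lambda(0,t)}{\Pi((x_1,\dots,x_N,0,\dots),y;0,t)}$ (zero if $\lambda$ has more than $N$ parts), where $P_\lambda(\cdot;0,t)$ is the Hall–Littlewood polynomial, $b_\lambda(0,t)=\prod_{s\in\lambda}\frac{1-0^{a(s)}t^{l(s)+1}}{1-0^{a(s)+1}t^{l(s)}}$ ($0^0=1$; $a(s),l(s)$ arm and leg), $\Pi(x,y;0,t)=\prod_{i,j}\frac{1-tx_iy_j}{1-x_iy_j}$. Young Tableau Algorithm: coins indexed by $N\ge1$, coin $N$ showing heads with probability $u/q^N$, all flips independent. Start with $\lambda=\emptyset$, $N=1$. Flip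 coin $N$. If tails, interval $N$ ends; set $N\to N+1$ and flip the new coin. If heads, choose a column $S\ge1$ with $\Pr(S=1)=\frac{q^{N-\lambda'_1}-1}{q^N-1}$ and $\Pr(S=s)=\frac{q^{N-\lambda'_s}-q^{N-\lambda'_{s-1}}}{q^N-1}$ for $s>1$ (computed from the current $\lambda$), add one box at the bottom of column $S$, and flip coin $N$ again. *)

theory Defs
  imports Complex_Main
begin

definition is_partition :: "nat list \<Rightarrow> bool" where
  "is_partition lam \<longleftrightarrow> sorted_wrt (\<ge>) lam \<and> 0 \<notin> set lam"

definition size_part :: "nat list \<Rightarrow> nat" where
  "size_part lam = sum_list lam"

definition first_part :: "nat list \<Rightarrow> nat" where
  "first_part lam = (case lam of [] \<Rightarrow> 0 | x # _ \<Rightarrow> x)"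

definition conj_part :: "nat list \<Rightarrow> nat \<Rightarrow> nat" where
  "conj_part lam s = length (filter (\<lambda>x. s \<le> x) lam)"

definition mult_part :: "nat list \<Rightarrow> nat \<Rightarrow> nat" where
  "mult_part lam i = count_list lam i"

definition qpoch :: "real \<Rightarrow> real \<Rightarrow> nat \<Rightarrow> real" where
  "qpoch q a N = (\<Prod>k<N. 1 - a / q ^ k)"

text \<open>Add one box at the bottom of column s.\<close>
definition add_box :: "nat list \<Rightarrow> nat \<Rightarrow> nat list" where
  "add_box lam s = (let c = conj_part lam s in
     if c < length lam then lam[c := lam ! c + 1] else lam @ [1])"

text \<open>Probability that, during interval N with current partition lam, column s is chosen.\<close>
definition col_prob :: "real \<Rightarrow> nat \<Rightarrow> nat list \<Rightarrow> nat \<Rightarrow> real" where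
  "col_prob q N lam s =
     (if s = 1 then (q powi (int N - int (conj_part lam 1)) - 1) / (q ^ N - 1)
      else (q powi (int N - int (conj_part lam s)) - q powi (int N - int (conj_part lam (s - 1))))
             / (q ^ N - 1))"

text \<open>Probability that, during interval N, starting from mu, the next k coin flips are heads
  and the resulting partition is lam.  Columns s > first_part mu + 1 have probability 0
  and are omitted from the sum.\<close>
fun heads_walk :: "real \<Rightarrow> real \<Rightarrow> nat \<Rightarrow> nat \<Rightarrow> nat list \<Rightarrow> nat list \<Rightarrow> real" where
  "heads_walk q u N 0 mu lam = (if mu = lam then 1 else 0)"
| "heads_walk q u N (Suc k) mu lam =
     (\<Sum>s\<in>{1..first_part mu + 1}. (u / q ^ N) * col_prob q N mu s
        * heads_walk q u N k (add_box mu s) lam)"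

text \<open>Transition probability over interval N: some number k of heads followed by a tail.\<close>
definition interval_kernel :: "real \<Rightarrow> real \<Rightarrow> nat \<Rightarrow> nat list \<Rightarrow> nat list \<Rightarrow> real" where
  "interval_kernel q u N mu lam = (\<Sum>k. heads_walk q u N k mu lam * (1 - u / q ^ N))"

text \<open>Probability that the algorithm has produced lam at the end of interval N
  (end of interval 0 = initial empty partition).  Only partitions mu with
  |mu| \<le> |lam| can lead to lam, so the sum is restricted to these.\<close>
fun yta_dist :: "real \<Rightarrow> real \<Rightarrow> nat \<Rightarrow> nat list \<Rightarrow> real" where
  "yta_dist q u 0 lam = (if lam = [] then 1 else 0)"
| "yta_dist q u (Suc N) lam =
     (\<Sum>mu\<in>{mu. is_partition mu \<and> size_part mu \<le> size_part lam}.
        yta_dist q u N mu * interval_kernel q u (Suc N) mu lam)"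

end

theory Submission
  imports Defs
begin

(* Given that interval N ends with the distribution F_N of the closed formula,
   the probability W(lam) that the walk of interval N+1 ever visits lam satisfies
   W(lam) = F_N(lam) + sum_mu W(mu) h(mu, lam), mu one box smaller and h the one-step heads
   probability, and the walk stops at lam with probability (1 - u/q^(N+1)) W(lam).  So it suffices
   that F_(N+1) solves the same recursion:
     F_(N+1)(lam) = (1 - u/q^(N+1)) F_N(lam) + sum_mu F_(N+1)(mu) h(mu, lam).
   In terms of the conjugate partition, removing the box at the bottom of column s contributes
   F_(N+1)(lam) (q^lam'_s - q^lam'_(s+1)) / (q^(N+1) - 1); these telescope to
   F_(N+1)(lam) (q^lam'_1 - 1) / (q^(N+1) - 1), and the first term supplies the missing
   F_(N+1)(lam) (q^(N+1) - q^lam'_1) / (q^(N+1) - 1). *)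

lemma length_le_sum_list: "0 \<notin> set xs \<Longrightarrow> length xs \<le> sum_list xs"
  by (induction xs) (auto simp: Suc_le_eq)

lemma prod_remove2:
  "finite I \<Longrightarrow> a \<in> I \<Longrightarrow> b \<in> I \<Longrightarrow> a \<noteq> b \<Longrightarrow> prod f I = f a * f b * prod f (I - {a, b})"
proof -
  assume I: "finite I" and ab: "a \<in> I" "b \<in> I" "a \<noteq> b"
  have "prod f I = f a * prod f (I - {a})" using I ab(1) by (rule prod.remove)
  also have "prod f (I - {a}) = f b * prod f (I - {a} - {b})" using I ab by (intro prod.remove) auto
  also have "I - {a} - {b} = I - {a, b}" by auto
  finally show ?thesis by (simp add: mult.assoc)
qed

lemma power_int_diff_nat: "c \<le> M \<Longrightarrow> (q::real) powi (int M - int c) = q ^ (M - c)"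
  by (simp add: power_int_def nat_diff_distrib)

section \<open>Conjugate partitions\<close>

lemma conj_part_Nil [simp]: "conj_part [] t = 0"
  by (simp add: conj_part_def)

lemma conj_part_Cons: "conj_part (x # xs) t = (if t \<le> x then Suc (conj_part xs t) else conj_part xs t)"
  by (simp add: conj_part_def)

lemma conj_part_append: "conj_part (xs @ ys) t = conj_part xs t + conj_part ys t"
  by (simp add: conj_part_def)

lemma conj_part_le_length: "conj_part a t \<le> length a"
  by (simp add: conj_part_def)

lemma conj_part_1: "0 \<notin> set a \<Longrightarrow> conj_part a 1 = length a"
  by (induction a) (auto simp: conj_part_Cons)

lemma conj_part_antimono: "s \<le> t \<Longrightarrow> conj_part a t \<le> conj_part a s"
  by (induction a) (auto simp: conj_part_Cons)

lemma le_nth_iff_less_conj_part: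
  assumes "sorted_wrt (\<ge>) a" and "i < length a"
  shows "t \<le> a ! i \<longleftrightarrow> i < conj_part a t"
  using assms
proof (induction a arbitrary: i)
  case (Cons x xs)
  show ?case
  proof (cases "t \<le> x")
    case True
    then show ?thesis using Cons by (cases i) (auto simp: conj_part_Cons)
  next
    case False
    then have small: "\<forall>y\<in>set (x # xs). y < t" using Cons.prems(1) by auto
    then have "conj_part (x # xs) t = 0" by (auto simp: conj_part_def filter_empty_conv)
    moreover have "(x # xs) ! i < t" using small Cons.prems(2) by (meson nth_mem)
    ultimately show ?thesis by simp
  qed
qed simp

lemma nth_eq_iff_conj_part:
  assumes "sorted_wrt (\<ge>) a" and "conj_part a (Suc t) \<le> i" and "i < conj_part a t"
  shows "i < length a" and "a ! i = t"
proof -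
  show i: "i < length a" using assms(3) conj_part_le_length[of a t] by linarith
  show "a ! i = t"
    using le_nth_iff_less_conj_part[OF assms(1) i, of t] le_nth_iff_less_conj_part[OF assms(1) i, of "Suc t"]
      assms(2,3)
    by simp
qed

lemma conj_part_eq_0_iff:
  assumes "is_partition a" and "1 \<le> t"
  shows "conj_part a t = 0 \<longleftrightarrow> first_part a < t"
  using assms by (cases a) (auto simp: is_partition_def first_part_def conj_part_def filter_empty_conv)

lemma first_part_le_size: "first_part a \<le> size_part a"
  by (cases a) (auto simp: first_part_def size_part_def)

lemma mult_part_conj: "mult_part a i = conj_part a i - conj_part a (Suc i)"
proof (induction a)
  case (Cons x xs)
  have "conj_part xs (Suc i) \<le> conj_part xs i" by (rule conj_part_antimono) simp
  then show ?case using Cons by (auto simp: mult_part_def conj_part_Cons)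
qed (simp add: mult_part_def)

lemma conj_part_list_update:
  "c < length a \<Longrightarrow>
   conj_part (a[c := v]) t + (if t \<le> a ! c then 1 else 0) = conj_part a t + (if t \<le> v then 1 else 0)"
proof (induction a arbitrary: c)
  case (Cons x xs)
  then show ?case by (cases c) (auto simp: conj_part_Cons)
qed simp

lemma partition_eqI:
  assumes "is_partition a" and "is_partition b" and "\<And>t. 1 \<le> t \<Longrightarrow> conj_part a t = conj_part b t"
  shows "a = b"
proof -
  have z: "0 \<notin> set a" "0 \<notin> set b" and s: "sorted_wrt (\<ge>) a" "sorted_wrt (\<ge>) b"
    using assms by (auto simp: is_partition_def)
  have len: "length a = length b"
    using assms(3)[of 1] conj_part_1[OF z(1)] conj_part_1[OF z(2)] by simp
  show ?thesis
  proof (rule nth_equalityI[OF len])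
    fix i assume i: "i < length a"
    have ib: "i < length b" using i len by simp
    have pos: "1 \<le> a ! i" "1 \<le> b ! i" using z i ib by (metis less_one not_le nth_mem)+
    have "t \<le> a ! i \<longleftrightarrow> t \<le> b ! i" if "1 \<le> t" for t
      using le_nth_iff_less_conj_part[OF s(1) i, of t] le_nth_iff_less_conj_part[OF s(2) ib, of t]
        assms(3)[OF that]
      by simp
    then show "a ! i = b ! i" using pos by (meson antisym order_refl)
  qed
qed

lemma partition_size_0: "is_partition lam \<Longrightarrow> size_part lam = 0 \<Longrightarrow> lam = []"
  by (cases lam) (auto simp: is_partition_def size_part_def)

definition partitions :: "nat \<Rightarrow> nat list set" where
  "partitions n = {v. is_partition v \<and> size_part v = n}"

definition partitions_le :: "nat \<Rightarrow> nat list set" where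
  "partitions_le n = {v. is_partition v \<and> size_part v \<le> n}"

lemma finite_partitions_le: "finite (partitions_le n)"
proof (rule finite_subset)
  show "partitions_le n \<subseteq> {xs. set xs \<subseteq> {..n} \<and> length xs \<le> n}"
  proof
    fix xs assume "xs \<in> partitions_le n"
    then have "0 \<notin> set xs" "sum_list xs \<le> n"
      by (auto simp: partitions_le_def is_partition_def size_part_def)
    then show "xs \<in> {xs. set xs \<subseteq> {..n} \<and> length xs \<le> n}"
      using length_le_sum_list[of xs] member_le_sum_list[of _ xs] by fastforce
  qed
  show "finite {xs. set xs \<subseteq> {..n} \<and> length xs \<le> n}"
    by (rule finite_lists_length_le) simp
qed

lemma finite_partitions: "finite (partitions n)"
  by (rule finite_subset[OF _ finite_partitions_le[of n]]) (auto simp: partitions_def partitions_le_def)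

section \<open>Adding and removing boxes\<close>

definition addable :: "nat list \<Rightarrow> nat \<Rightarrow> bool" where
  "addable a s \<longleftrightarrow> 1 \<le> s \<and> (s = 1 \<or> conj_part a s < conj_part a (s - 1))"

definition corner :: "nat list \<Rightarrow> nat \<Rightarrow> bool" where
  "corner a s \<longleftrightarrow> 1 \<le> s \<and> conj_part a (Suc s) < conj_part a s"

(* The bottom box of column s ends row \<lambda>'_s, which has index \<lambda>'_s - 1; for s = 1 that row has
   length 1 and disappears. *)
definition rem_box :: "nat list \<Rightarrow> nat \<Rightarrow> nat list" where
  "rem_box a s = (if s = 1 then butlast a else a[conj_part a s - 1 := s - 1])"

lemma sorted_wrt_list_update:
  assumes "sorted_wrt (\<ge>) a" and "c < length a"
    and "\<And>i. i < c \<Longrightarrow> v \<le> a ! i" and "\<And>j. c < j \<Longrightarrow> j < length a \<Longrightarrow> a ! j \<le> v"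
  shows "sorted_wrt (\<ge>) (a[c := v])"
  using assms by (auto simp: sorted_wrt_iff_nth_less nth_list_update)

lemma size_part_list_update:
  "c < length a \<Longrightarrow> size_part (a[c := v]) + a ! c = size_part a + v"
  by (induction a arbitrary: c) (auto simp: size_part_def split: nat.splits)

lemma add_box_properties:
  assumes p: "is_partition a" and s: "addable a s"
  shows partition_add_box: "is_partition (add_box a s)"
    and conj_part_add_box: "\<And>t. 1 \<le> t \<Longrightarrow> conj_part (add_box a s) t = conj_part a t + (if t = s then 1 else 0)"
    and size_part_add_box: "size_part (add_box a s) = Suc (size_part a)"
proof -
  have z: "0 \<notin> set a" and so: "sorted_wrt (\<ge>) a" using p by (auto simp: is_partition_def)
  consider "s = 1" | "2 \<le> s" "conj_part a s < conj_part a (s - 1)"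
    using s by (force simp: addable_def)
  then have "is_partition (add_box a s) \<and>
    (\<forall>t\<ge>1. conj_part (add_box a s) t = conj_part a t + (if t = s then 1 else 0)) \<and>
    size_part (add_box a s) = Suc (size_part a)"
  proof cases
    case 1
    then have "add_box a s = a @ [1]" using conj_part_1[OF z] by (simp add: add_box_def Let_def)
    moreover have "is_partition (a @ [1])"
      using z so by (auto simp: is_partition_def sorted_wrt_append Suc_le_eq intro!: gr0I)
    ultimately show ?thesis using 1 by (auto simp: conj_part_append conj_part_Cons size_part_def)
  next
    case 2
    define c where "c = conj_part a s"
    have c: "c < length a" and ac: "a ! c = s - 1"
      using nth_eq_iff_conj_part[OF so, of "s - 1" c] 2 by (simp_all add: c_def)
    have e: "add_box a s = a[c := s]" using c ac 2 by (simp add: add_box_def Let_def c_def[symmetric])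
    have "sorted_wrt (\<ge>) (a[c := s])"
    proof (rule sorted_wrt_list_update[OF so c])
      fix i assume "i < c" then show "s \<le> a ! i" using le_nth_iff_less_conj_part[OF so, of i s] c c_def by simp
    next
      fix j assume "c < j" "j < length a"
      then have "a ! j \<le> a ! c" using so by (auto simp: sorted_wrt_iff_nth_less)
      then show "a ! j \<le> s" using ac by simp
    qed
    then have "is_partition (a[c := s])"
      using z 2 set_update_subset_insert[of a c s] by (auto simp: is_partition_def)
    moreover have "conj_part (a[c := s]) t = conj_part a t + (if t = s then 1 else 0)" if "1 \<le> t" for t
      using conj_part_list_update[OF c, of s t] ac 2 that by (auto split: if_splits)
    moreover have "size_part (a[c := s]) = Suc (size_part a)"
      using size_part_list_update[OF c, of s] ac 2 by simp
    ultimately show ?thesis using e by simp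
  qed
  then show "is_partition (add_box a s)" "size_part (add_box a s) = Suc (size_part a)"
    and "\<And>t. 1 \<le> t \<Longrightarrow> conj_part (add_box a s) t = conj_part a t + (if t = s then 1 else 0)"
    by auto
qed

lemma corner_1_eq_snoc:
  assumes "is_partition a" and "corner a 1"
  shows "a = butlast a @ [1]"
proof -
  have z: "0 \<notin> set a" and so: "sorted_wrt (\<ge>) a" using assms(1) by (auto simp: is_partition_def)
  have c: "conj_part a 2 < conj_part a 1" using assms(2) by (simp add: corner_def numeral_2_eq_2)
  then have ne: "a \<noteq> []" by auto
  have "a ! (length a - 1) = 1"
    using nth_eq_iff_conj_part[OF so, of 1 "length a - 1"] conj_part_1[OF z] c by (simp add: numeral_2_eq_2)
  then show ?thesis using ne by (metis append_butlast_last_id last_conv_nth)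
qed

lemma rem_box_properties:
  assumes p: "is_partition a" and s: "corner a s"
  shows partition_rem_box: "is_partition (rem_box a s)"
    and conj_part_rem_box: "\<And>t. 1 \<le> t \<Longrightarrow> conj_part (rem_box a s) t = conj_part a t - (if t = s then 1 else 0)"
    and size_part_rem_box: "Suc (size_part (rem_box a s)) = size_part a"
proof -
  have z: "0 \<notin> set a" and so: "sorted_wrt (\<ge>) a" using p by (auto simp: is_partition_def)
  have cs: "conj_part a (Suc s) < conj_part a s" using s by (simp add: corner_def)
  consider "s = 1" | "2 \<le> s"
    using s by (force simp: corner_def)
  then have "is_partition (rem_box a s) \<and>
    (\<forall>t\<ge>1. conj_part (rem_box a s) t + (if t = s then 1 else 0) = conj_part a t) \<and>
    Suc (size_part (rem_box a s)) = size_part a"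
  proof cases
    case 1
    then have ae: "a = butlast a @ [1]" using corner_1_eq_snoc p s by simp
    have "is_partition (butlast a)" using p ae
      by (metis is_partition_def Un_iff set_append sorted_wrt_append)
    moreover have "conj_part a t = conj_part (butlast a) t + conj_part [1] t" for t
      using ae conj_part_append by metis
    moreover have "size_part a = Suc (size_part (butlast a))"
      using arg_cong[OF ae, of sum_list] by (simp add: size_part_def)
    ultimately show ?thesis using 1 by (auto simp: rem_box_def conj_part_Cons)
  next
    case 2
    define c where "c = conj_part a s - 1"
    have c: "c < length a" and ac: "a ! c = s"
      using nth_eq_iff_conj_part[OF so, of s c] cs by (simp_all add: c_def)
    have e: "rem_box a s = a[c := s - 1]" using 2 by (simp add: rem_box_def c_def)
    have "sorted_wrt (\<ge>) (a[c := s - 1])"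
    proof (rule sorted_wrt_list_update[OF so c])
      fix i assume "i < c" then have "a ! c \<le> a ! i" using so c by (auto simp: sorted_wrt_iff_nth_less)
      then show "s - 1 \<le> a ! i" using ac by simp
    next
      fix j assume "c < j" "j < length a"
      then have "\<not> s \<le> a ! j" using le_nth_iff_less_conj_part[OF so, of j s] c_def by simp
      then show "a ! j \<le> s - 1" by simp
    qed
    then have "is_partition (a[c := s - 1])"
      using z 2 set_update_subset_insert[of a c "s - 1"] by (auto simp: is_partition_def)
    moreover have "conj_part (a[c := s - 1]) t + (if t = s then 1 else 0) = conj_part a t" if "1 \<le> t" for t
      using conj_part_list_update[OF c, of "s - 1" t] ac 2 that by (auto split: if_splits)
    moreover have "Suc (size_part (a[c := s - 1])) = size_part a"
      using size_part_list_update[OF c, of "s - 1"] ac 2 by simp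
    ultimately show ?thesis using e by simp
  qed
  then show "is_partition (rem_box a s)" "Suc (size_part (rem_box a s)) = size_part a"
    and "\<And>t. 1 \<le> t \<Longrightarrow> conj_part (rem_box a s) t = conj_part a t - (if t = s then 1 else 0)"
    by auto
qed

lemma add_box_eq_iff_rem_box:
  assumes lam: "is_partition lam" and v: "is_partition v"
  shows "addable v s \<and> add_box v s = lam \<longleftrightarrow> corner lam s \<and> v = rem_box lam s"
proof
  assume h: "addable v s \<and> add_box v s = lam"
  then have conj: "\<And>t. 1 \<le> t \<Longrightarrow> conj_part lam t = conj_part v t + (if t = s then 1 else 0)"
    using conj_part_add_box[OF v] by blast
  have s: "1 \<le> s" using h by (simp add: addable_def)
  have "conj_part v (Suc s) \<le> conj_part v s" by (rule conj_part_antimono) simp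
  then have c: "corner lam s" using conj[of "Suc s"] conj[OF s] s by (simp add: corner_def)
  have "v = rem_box lam s"
    using conj conj_part_rem_box[OF lam c] by (intro partition_eqI[OF v partition_rem_box[OF lam c]]) fastforce
  then show "corner lam s \<and> v = rem_box lam s" using c by simp
next
  assume h: "corner lam s \<and> v = rem_box lam s"
  then have c: "corner lam s" and s: "1 \<le> s" and pos: "1 \<le> conj_part lam s" by (auto simp: corner_def)
  have conj: "\<And>t. 1 \<le> t \<Longrightarrow> conj_part v t + (if t = s then 1 else 0) = conj_part lam t"
    using conj_part_rem_box[OF lam c] h pos by auto
  have "addable v s"
  proof (cases "s = 1")
    case False
    have "1 \<le> s - 1" "s - 1 \<noteq> s" using False s by auto
    then have "conj_part v (s - 1) = conj_part lam (s - 1)" using conj[of "s - 1"] by simp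
    moreover have "conj_part lam s \<le> conj_part lam (s - 1)" by (rule conj_part_antimono) simp
    ultimately show ?thesis using conj[OF s] s by (simp add: addable_def)
  qed (simp add: addable_def)
  moreover have "add_box v s = lam"
    using conj conj_part_add_box[OF v \<open>addable v s\<close>]
    by (intro partition_eqI[OF partition_add_box[OF v \<open>addable v s\<close>] lam]) fastforce
  ultimately show "addable v s \<and> add_box v s = lam" by simp
qed

lemma sum_partitions_add_box:
  assumes lam: "is_partition lam" and size: "size_part lam = Suc n"
  shows "(\<Sum>v\<in>partitions n. if addable v s \<and> add_box v s = lam then g v else 0)
    = (if corner lam s then g (rem_box lam s) else 0)"
proof -
  have "(\<Sum>v\<in>partitions n. if addable v s \<and> add_box v s = lam then g v else 0)
      = (\<Sum>v\<in>partitions n. if corner lam s \<and> v = rem_box lam s then g v else 0)"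
    using add_box_eq_iff_rem_box[OF lam] by (intro sum.cong) (auto simp: partitions_def)
  also have "\<dots> = (if corner lam s then g (rem_box lam s) else 0)"
  proof (cases "corner lam s")
    case True
    then have "rem_box lam s \<in> partitions n"
      using partition_rem_box[OF lam] size_part_rem_box[OF lam] size by (simp add: partitions_def)
    then show ?thesis using True finite_partitions[of n] by simp
  qed simp
  finally show ?thesis .
qed

lemma addable_le_first_part:
  assumes "is_partition a" and "addable a s"
  shows "s \<le> Suc (first_part a)"
proof (cases "s = 1")
  case False
  then have "conj_part a (s - 1) \<noteq> 0" "1 \<le> s - 1" using assms(2) by (auto simp: addable_def)
  then show ?thesis using conj_part_eq_0_iff[OF assms(1), of "s - 1"] by linarith
qed simp

lemma corner_le_first_part: "is_partition a \<Longrightarrow> corner a s \<Longrightarrow> s \<le> first_part a"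
  using conj_part_eq_0_iff[of a s] by (fastforce simp: corner_def)

lemma first_part_rem_box:
  assumes lam: "is_partition lam" and s: "corner lam s"
  shows "first_part (rem_box lam s) \<le> first_part lam"
proof -
  have "conj_part lam (Suc (first_part lam)) = 0"
    using conj_part_eq_0_iff[OF lam] by simp
  then have "conj_part (rem_box lam s) (Suc (first_part lam)) = 0"
    using conj_part_rem_box[OF lam s, of "Suc (first_part lam)"] by simp
  then show ?thesis
    using conj_part_eq_0_iff[OF partition_rem_box[OF lam s]] by simp
qed

lemma col_prob_not_addable: "1 \<le> s \<Longrightarrow> \<not> addable a s \<Longrightarrow> col_prob q N a s = 0"
  using conj_part_antimono[of "s - 1" s a] by (simp add: addable_def col_prob_def)

section \<open>The walk within one interval\<close>

lemma heads_walk_support: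
  "is_partition mu \<Longrightarrow> heads_walk q u N k mu lam \<noteq> 0 \<Longrightarrow>
   is_partition lam \<and> size_part lam = size_part mu + k"
proof (induction k arbitrary: mu)
  case (Suc k)
  have "(\<Sum>s\<in>{1..first_part mu + 1}.
      u / q ^ N * col_prob q N mu s * heads_walk q u N k (add_box mu s) lam) \<noteq> 0"
    using Suc.prems(2) by (metis heads_walk.simps(2))
  then obtain s where s: "s \<in> {1..first_part mu + 1}"
    and nz: "u / q ^ N * col_prob q N mu s * heads_walk q u N k (add_box mu s) lam \<noteq> 0"
    by (meson sum.not_neutral_contains_not_neutral)
  then have "addable mu s" using col_prob_not_addable[of s mu q N] by fastforce
  then show ?case
    using Suc.IH[OF partition_add_box] size_part_add_box Suc.prems(1) nz by fastforce
qed (auto split: if_splits)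

lemma heads_walk_Suc_last:
  "is_partition mu \<Longrightarrow>
   heads_walk q u N (Suc k) mu lam =
     (\<Sum>v\<in>partitions (size_part mu + k). heads_walk q u N k mu v * heads_walk q u N 1 v lam)"
proof (induction k arbitrary: mu)
  case 0
  then have "mu \<in> partitions (size_part mu)" by (simp add: partitions_def)
  then show ?case using finite_partitions by (simp add: if_distrib[of "\<lambda>x. x * _"] cong: if_cong)
next
  case (Suc k)
  let ?w = "\<lambda>s. u / q ^ N * col_prob q N mu s"
  let ?S = "{1..first_part mu + 1}"
  let ?P = "partitions (size_part mu + Suc k)"
  have "heads_walk q u N (Suc (Suc k)) mu lam = (\<Sum>s\<in>?S. ?w s * heads_walk q u N (Suc k) (add_box mu s) lam)"
    by simp
  also have "\<dots> = (\<Sum>s\<in>?S. ?w s * (\<Sum>v\<in>?P. heads_walk q u N k (add_box mu s) v * heads_walk q u N 1 v lam))"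
  proof (rule sum.cong[OF refl])
    fix s assume s: "s \<in> ?S"
    show "?w s * heads_walk q u N (Suc k) (add_box mu s) lam
        = ?w s * (\<Sum>v\<in>?P. heads_walk q u N k (add_box mu s) v * heads_walk q u N 1 v lam)"
    proof (cases "addable mu s")
      case True
      then show ?thesis
        using Suc.IH[OF partition_add_box[OF Suc.prems True]] size_part_add_box[OF Suc.prems True] by simp
    next
      case False
      then show ?thesis using col_prob_not_addable s by simp
    qed
  qed
  also have "\<dots> = (\<Sum>v\<in>?P. (\<Sum>s\<in>?S. ?w s * heads_walk q u N k (add_box mu s) v) * heads_walk q u N 1 v lam)"
    by (simp only: sum_distrib_left sum_distrib_right mult.assoc sum.swap[of _ ?S])
  also have "\<dots> = (\<Sum>v\<in>?P. heads_walk q u N (Suc k) mu v * heads_walk q u N 1 v lam)"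
    by (simp only: heads_walk.simps(2))
  finally show ?case .
qed

lemma interval_kernel_eq:
  assumes "is_partition mu" and "size_part mu \<le> size_part lam"
  shows "interval_kernel q u N mu lam =
    heads_walk q u N (size_part lam - size_part mu) mu lam * (1 - u / q ^ N)"
proof -
  have "heads_walk q u N k mu lam * (1 - u / q ^ N) = 0" if "k \<noteq> size_part lam - size_part mu" for k
    using heads_walk_support[OF assms(1), of q u N k lam] assms(2) that by fastforce
  then show ?thesis
    unfolding interval_kernel_def by (subst suminf_finite[of "{size_part lam - size_part mu}"]) auto
qed

lemma heads_walk_1:
  assumes "is_partition v" and "size_part v = n"
  shows "heads_walk q u N 1 v lam =
    (\<Sum>s\<in>{1..Suc n}. if addable v s \<and> add_box v s = lam then u / q ^ N * col_prob q N v s else 0)"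
proof -
  have "heads_walk q u N 1 v lam =
      (\<Sum>s\<in>{1..Suc (first_part v)}. if addable v s \<and> add_box v s = lam then u / q ^ N * col_prob q N v s else 0)"
    using col_prob_not_addable by (auto intro!: sum.cong)
  also have "\<dots> = (\<Sum>s\<in>{1..Suc n}. if addable v s \<and> add_box v s = lam then u / q ^ N * col_prob q N v s else 0)"
    using first_part_le_size[of v] addable_le_first_part[OF assms(1)] assms(2)
    by (intro sum.mono_neutral_left) auto
  finally show ?thesis .
qed

section \<open>The closed formula\<close>

lemma qpoch_0 [simp]: "qpoch q a 0 = 1"
  by (simp add: qpoch_def)

lemma qpoch_Suc: "qpoch q a (Suc m) = qpoch q a m * (1 - a / q ^ m)"
  by (simp add: qpoch_def)

lemma qpoch_pos:
  assumes "1 \<le> q" and "a < 1"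
  shows "0 < qpoch q a m"
  unfolding qpoch_def
proof (rule prod_pos)
  fix k
  have "a / q ^ k < 1"
  proof (cases "a \<le> 0")
    case False
    then have "a / q ^ k \<le> a" using assms(1) by (simp add: divide_le_eq mult_le_cancel_left1)
    then show ?thesis using assms(2) by simp
  qed (use assms(1) in \<open>simp add: divide_nonpos_pos less_le_trans[OF _ one_le_power]\<close>)
  then show "0 < 1 - a / q ^ k" by simp
qed

lemma qpoch_inverse_nonzero: "1 < q \<Longrightarrow> qpoch q (1 / q) m \<noteq> 0"
  using qpoch_pos[of q "1 / q" m] by simp

definition yta_formula :: "real \<Rightarrow> real \<Rightarrow> nat \<Rightarrow> nat list \<Rightarrow> real" where
  "yta_formula q u N lam = (if length lam > N then 0
     else u ^ size_part lam * qpoch q (u / q) N * qpoch q (1 / q) N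
            / qpoch q (1 / q) (N - conj_part lam 1)
          * (\<Prod>i\<in>{1..first_part lam}.
               1 / (q ^ ((conj_part lam i)\<^sup>2) * qpoch q (1 / q) (mult_part lam i))))"

(* \<lambda>'_i with the convention \<lambda>'_0 = N, so that the factor 1/(1/q)_(N - \<lambda>'_1) of the formula
   joins the factors 1/(1/q)_(m_i) = 1/(1/q)_(\<lambda>'_i - \<lambda>'_(i+1)). *)
definition conj_ext :: "nat \<Rightarrow> nat list \<Rightarrow> nat \<Rightarrow> nat" where
  "conj_ext N lam i = (if i = 0 then N else conj_part lam i)"

lemma conj_ext_antimono:
  assumes "conj_part lam 1 \<le> N" and "i \<le> j"
  shows "conj_ext N lam j \<le> conj_ext N lam i"
  using assms conj_part_antimono[of i j lam] conj_part_antimono[of 1 j lam]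
  by (auto simp: conj_ext_def)

definition gap_prod :: "real \<Rightarrow> nat \<Rightarrow> nat list \<Rightarrow> nat \<Rightarrow> real" where
  "gap_prod q N lam K = (\<Prod>i\<in>{0..K}. 1 / qpoch q (1 / q) (conj_ext N lam i - conj_ext N lam (Suc i)))"

definition square_prod :: "real \<Rightarrow> nat list \<Rightarrow> nat \<Rightarrow> real" where
  "square_prod q lam K = (\<Prod>i\<in>{1..K}. 1 / q ^ (conj_part lam i)\<^sup>2)"

lemma gap_prod_split:
  "gap_prod q N lam K = 1 / qpoch q (1 / q) (N - conj_part lam 1)
     * (\<Prod>i\<in>{1..K}. 1 / qpoch q (1 / q) (conj_part lam i - conj_part lam (Suc i)))"
  unfolding gap_prod_def by (subst prod.atLeast_Suc_atMost) (auto simp: conj_ext_def intro!: prod.cong)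

lemma yta_formula_conj:
  assumes lam: "is_partition lam" and K: "first_part lam \<le> K"
  shows "yta_formula q u N lam = (if N < conj_part lam 1 then 0 else
    u ^ size_part lam * qpoch q (u / q) N * qpoch q (1 / q) N * gap_prod q N lam K * square_prod q lam K)"
proof -
  let ?g = "\<lambda>i. 1 / qpoch q (1 / q) (conj_part lam i - conj_part lam (Suc i))"
  have len: "length lam = conj_part lam 1"
    using lam conj_part_1 by (simp add: is_partition_def)
  have "(\<Prod>i\<in>{1..first_part lam}. 1 / (q ^ (conj_part lam i)\<^sup>2 * qpoch q (1 / q) (mult_part lam i)))
      = (\<Prod>i\<in>{1..first_part lam}. ?g i * (1 / q ^ (conj_part lam i)\<^sup>2))"
    by (simp add: mult_part_conj mult.commute)
  also have "\<dots> = (\<Prod>i\<in>{1..K}. ?g i * (1 / q ^ (conj_part lam i)\<^sup>2))"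
  proof (intro prod.mono_neutral_left)
    have "conj_part lam i = 0" if "first_part lam < i" for i
      using conj_part_eq_0_iff[OF lam, of i] that by simp
    then show "\<forall>i\<in>{1..K} - {1..first_part lam}. ?g i * (1 / q ^ (conj_part lam i)\<^sup>2) = 1"
      by force
  qed (use K in auto)
  also have "\<dots> = (\<Prod>i\<in>{1..K}. ?g i) * square_prod q lam K"
    unfolding square_prod_def by (rule prod.distrib)
  finally show ?thesis
    unfolding yta_formula_def len gap_prod_split by simp
qed

lemma gap_prod_Suc:
  assumes q: "1 < q" and N: "conj_part lam 1 \<le> N"
  shows "gap_prod q (Suc N) lam K * (1 - 1 / q ^ (Suc N - conj_part lam 1)) = gap_prod q N lam K"
proof -
  have "q * q ^ (N - conj_part lam 1) \<noteq> 1"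
    using one_less_power[OF q, of "Suc (N - conj_part lam 1)"] by simp
  then show ?thesis
    using N unfolding gap_prod_split by (simp add: Suc_diff_le qpoch_Suc)
qed

lemma yta_formula_Suc:
  assumes lam: "is_partition lam" and q: "1 < q" and N: "conj_part lam 1 \<le> N"
  shows "yta_formula q u (Suc N) lam * (1 - 1 / q ^ (Suc N - conj_part lam 1))
    = yta_formula q u N lam * (1 - u / q ^ Suc N) * (1 - 1 / q ^ Suc N)"
  using N
  unfolding yta_formula_conj[OF lam order_refl] gap_prod_Suc[OF q N, of "first_part lam", symmetric]
  by (simp add: qpoch_Suc mult_ac)

lemma yta_formula_stay:
  assumes lam: "is_partition lam" and q: "1 < q"
  shows "(1 - u / q ^ Suc N) * yta_formula q u N lam
    = yta_formula q u (Suc N) lam * (q ^ Suc N - q ^ conj_part lam 1) / (q ^ Suc N - 1)"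
proof (cases "N < conj_part lam 1")
  case True
  then have "yta_formula q u (Suc N) lam * (q ^ Suc N - q ^ conj_part lam 1) = 0"
    using yta_formula_conj[OF lam order_refl, of q u "Suc N"] by (cases "Suc N = conj_part lam 1") auto
  then show ?thesis
    using True yta_formula_conj[OF lam order_refl, of q u N] by simp
next
  case False
  define Q C where "Q = q ^ Suc N" and "C = q ^ conj_part lam 1"
  have Q: "Q \<noteq> 0" "Q - 1 \<noteq> 0"
    using q one_less_power[OF q, of "Suc N"] by (auto simp: Q_def)
  have "1 - 1 / q ^ (Suc N - conj_part lam 1) = (Q - C) / Q"
    using q False by (simp add: Q_def C_def field_simps power_diff)
  moreover have "1 - 1 / Q = (Q - 1) / Q"
    using Q by (simp add: field_simps)
  moreover define a where "a = u / Q"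
  ultimately have "yta_formula q u (Suc N) lam * ((Q - C) / Q)
      = yta_formula q u N lam * (1 - a) * ((Q - 1) / Q)"
    using yta_formula_Suc[OF lam q, of N u] False by (simp add: Q_def a_def)
  then have "yta_formula q u (Suc N) lam * (Q - C) = (1 - a) * yta_formula q u N lam * (Q - 1)"
    using Q by (simp add: field_simps)
  then show ?thesis
    using Q unfolding Q_def[symmetric] C_def[symmetric] a_def[symmetric] by (simp add: field_simps)
qed

section \<open>Removing a corner\<close>

lemma gap_prod_rem_box:
  assumes lam: "is_partition lam" and s: "corner lam s" and K: "s \<le> K"
    and q: "1 < q" and M: "conj_part lam 1 \<le> M"
  shows "gap_prod q M (rem_box lam s) K * (1 - 1 / q ^ (conj_ext M lam (s - 1) - conj_part lam s + 1))
    = gap_prod q M lam K * (1 - 1 / q ^ (conj_part lam s - conj_part lam (Suc s)))"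
proof -
  define x y z where "x = conj_ext M lam (s - 1)" and "y = conj_part lam s" and "z = conj_part lam (Suc s)"
  have s1: "1 \<le> s" using s by (simp add: corner_def)
  obtain d where d: "y = z + d + 1"
    using s by (auto simp: corner_def y_def z_def dest: less_imp_Suc_add)
  have "y \<le> x"
    using conj_ext_antimono[OF M, of "s - 1" s] s1 by (simp add: x_def y_def conj_ext_def)
  then obtain e where e: "x = y + e" using le_Suc_ex by blast
  let ?v = "conj_ext M (rem_box lam s)"
  have v: "?v i = (if i = s then y - 1 else conj_ext M lam i)" for i
    using conj_part_rem_box[OF lam s, of i] s1 by (auto simp: conj_ext_def y_def)
  let ?f = "\<lambda>c i. 1 / qpoch q (1 / q) (c i - c (Suc i))"
  have I: "finite {0..K}" "s - 1 \<in> {0..K}" "s \<in> {0..K}" "s - 1 \<noteq> s" using K s1 by auto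
  define R where "R = (\<Prod>i\<in>{0..K} - {s - 1, s}. ?f (conj_ext M lam) i)"
  have "(\<Prod>i\<in>{0..K} - {s - 1, s}. ?f ?v i) = R"
    unfolding R_def using s1 by (intro prod.cong) (auto simp: v)
  moreover have lam_vals: "conj_ext M lam s = y" "conj_ext M lam (Suc s) = z" "Suc (s - 1) = s"
    using s1 by (auto simp: y_def z_def conj_ext_def)
  moreover have "?v (s - 1) = x" "?v s = y - 1" "?v (Suc s) = z"
    using I(4) lam_vals by (simp_all add: v x_def)
  ultimately have Gv: "gap_prod q M (rem_box lam s) K = R / (qpoch q (1 / q) (Suc e) * qpoch q (1 / q) d)"
    and Gl: "gap_prod q M lam K = R / (qpoch q (1 / q) e * qpoch q (1 / q) (Suc d))"
    unfolding gap_prod_def prod_remove2[OF I] R_def using d e by (simp_all add: x_def)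
  define A B where "A = 1 - 1 / q ^ Suc e" and "B = 1 - 1 / q ^ Suc d"
  have "qpoch q (1 / q) (Suc e) = qpoch q (1 / q) e * A" "qpoch q (1 / q) (Suc d) = qpoch q (1 / q) d * B"
    by (simp_all add: A_def B_def qpoch_Suc)
  moreover have "A \<noteq> 0" "B \<noteq> 0"
    using one_less_power[OF q, of "Suc e"] one_less_power[OF q, of "Suc d"] by (auto simp: A_def B_def)
  moreover have "qpoch q (1 / q) e \<noteq> 0" "qpoch q (1 / q) d \<noteq> 0"
    using qpoch_inverse_nonzero[OF q] by auto
  moreover have exps: "x - y + 1 = Suc e" "y - z = Suc d" using d e by simp_all
  ultimately show ?thesis
    unfolding x_def[symmetric] y_def[symmetric] z_def[symmetric] exps A_def[symmetric] B_def[symmetric] Gv Gl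
    by simp
qed

lemma square_prod_rem_box:
  assumes lam: "is_partition lam" and s: "corner lam s" and K: "s \<le> K" and q: "q \<noteq> 0"
  shows "square_prod q (rem_box lam s) K = square_prod q lam K * q ^ (2 * conj_part lam s - 1)"
proof -
  define y where "y = conj_part lam s"
  have s1: "1 \<le> s" and y: "1 \<le> y" using s by (auto simp: corner_def y_def)
  have sK: "s \<in> {1..K}" using s1 K by simp
  have "(\<Prod>i\<in>{1..K} - {s}. 1 / q ^ (conj_part (rem_box lam s) i)\<^sup>2)
      = (\<Prod>i\<in>{1..K} - {s}. 1 / q ^ (conj_part lam i)\<^sup>2)"
    using conj_part_rem_box[OF lam s] by (intro prod.cong) simp_all
  moreover have "conj_part (rem_box lam s) s = y - 1"
    using conj_part_rem_box[OF lam s s1] by (simp add: y_def)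
  moreover have "y\<^sup>2 = (y - 1)\<^sup>2 + (2 * y - 1)"
    using y by (cases y) (simp_all add: power2_eq_square)
  then have "q ^ y\<^sup>2 = q ^ (y - 1)\<^sup>2 * q ^ (2 * y - 1)"
    by (metis power_add)
  ultimately show ?thesis
    unfolding square_prod_def prod.remove[OF finite_atLeastAtMost sK]
    using q by (simp add: y_def[symmetric] field_simps)
qed

lemma yta_formula_rem_box_ratio:
  assumes lam: "is_partition lam" and s: "corner lam s" and q: "1 < q" and M: "conj_part lam 1 \<le> M"
  shows "yta_formula q u M lam * (1 - 1 / q ^ (conj_part lam s - conj_part lam (Suc s)))
      * q ^ (2 * conj_part lam s - 1)
    = u * yta_formula q u M (rem_box lam s) * (1 - 1 / q ^ (conj_ext M lam (s - 1) - conj_part lam s + 1))"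
proof -
  let ?v = "rem_box lam s"
  let ?K = "first_part lam"
  have v: "is_partition ?v" "first_part ?v \<le> ?K" "conj_part ?v 1 \<le> M" "u ^ size_part lam = u * u ^ size_part ?v"
    using partition_rem_box[OF lam s] first_part_rem_box[OF lam s] conj_part_rem_box[OF lam s, of 1] M
      size_part_rem_box[OF lam s, symmetric]
    by auto
  have "s \<le> ?K" by (rule corner_le_first_part[OF lam s])
  with gap_prod_rem_box[OF lam s _ q M] square_prod_rem_box[OF lam s, of ?K q] q M v show ?thesis
    unfolding yta_formula_conj[OF lam order_refl] yta_formula_conj[OF v(1,2)]
    by (simp add: ac_simps)
qed

lemma col_prob_rem_box:
  assumes lam: "is_partition lam" and s: "corner lam s" and M: "conj_part lam 1 \<le> M"
  shows "col_prob q M (rem_box lam s) s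
    = (q ^ (M - (conj_part lam s - 1)) - q ^ (M - conj_ext M lam (s - 1))) / (q ^ M - 1)"
proof -
  have s1: "1 \<le> s" using s by (simp add: corner_def)
  have "conj_part lam s - 1 \<le> M"
    using M s1 conj_part_antimono[of 1 s lam] by simp
  moreover have "conj_ext M lam (s - 1) \<le> M"
    using conj_ext_antimono[OF M, of 0 "s - 1"] by (simp add: conj_ext_def)
  moreover have "conj_part (rem_box lam s) s = conj_part lam s - 1"
    using conj_part_rem_box[OF lam s s1] by simp
  moreover have "conj_part (rem_box lam s) (s - 1) = conj_ext M lam (s - 1)" if "s \<noteq> 1"
  proof -
    have "1 \<le> s - 1" "s - 1 \<noteq> s" "s - 1 \<noteq> 0" using that s1 by auto
    then show ?thesis using conj_part_rem_box[OF lam s, of "s - 1"] by (simp add: conj_ext_def)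
  qed
  ultimately show ?thesis
    using s1 by (auto simp: col_prob_def conj_ext_def power_int_diff_nat)
qed

lemma rem_box_weight_identity:
  fixes q :: real
  assumes q: "0 < q" and "z < y" "y \<le> x" "x \<le> M"
  shows "(q ^ (M - (y - 1)) - q ^ (M - x)) / q ^ M * ((1 - 1 / q ^ (y - z)) * q ^ (2 * y - 1))
    = (1 - 1 / q ^ (x - y + 1)) * (q ^ y - q ^ z)"
proof -
  obtain d e r where "y = z + d + 1" "x = y + e" "M = x + r"
    using assms(2-4) by (metis add.commute le_Suc_ex less_imp_Suc_add plus_1_eq_Suc)
  then have "M - (y - 1) = e + r + 1" "M - x = r" "M = z + d + 1 + e + r" "y - z = d + 1"
    "2 * y - 1 = z + z + d + d + 1" "x - y + 1 = e + 1" "y = z + d + 1"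
    by simp_all
  then show ?thesis
    using q by (simp only:) (simp add: field_simps power_add)
qed

lemma yta_formula_rem_box:
  assumes lam: "is_partition lam" and s: "corner lam s" and q: "1 < q"
  shows "yta_formula q u M (rem_box lam s) * (u / q ^ M * col_prob q M (rem_box lam s) s)
    = yta_formula q u M lam * (q ^ conj_part lam s - q ^ conj_part lam (Suc s)) / (q ^ M - 1)"
proof (cases "M < conj_part lam 1")
  case True
  let ?v = "rem_box lam s"
  have "yta_formula q u M ?v * col_prob q M ?v s = 0"
  proof (cases "M < conj_part ?v 1")
    case True
    then show ?thesis using yta_formula_conj[OF partition_rem_box[OF lam s] order_refl] by simp
  next
    case False
    then have "s = 1" "conj_part ?v 1 = M"
      using conj_part_rem_box[OF lam s, of 1] \<open>M < conj_part lam 1\<close> by (auto split: if_splits)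
    then show ?thesis by (simp add: col_prob_def)
  qed
  then show ?thesis using True yta_formula_conj[OF lam order_refl, of q u M] by auto
next
  case False
  then have M: "conj_part lam 1 \<le> M" by simp
  define x y z where "x = conj_ext M lam (s - 1)" and "y = conj_part lam s" and "z = conj_part lam (Suc s)"
  have zy: "z < y" using s by (simp add: corner_def y_def z_def)
  have "y \<le> x" "x \<le> M"
    using conj_ext_antimono[OF M, of "s - 1" s] conj_ext_antimono[OF M, of 0 "s - 1"] s
    by (auto simp: x_def y_def conj_ext_def corner_def)
  define R where "R = (1 - 1 / q ^ (y - z)) * q ^ (2 * y - 1)"
  have "1 < q ^ (y - z)" using one_less_power[OF q] zy by simp
  then have "R \<noteq> 0" using q by (simp add: R_def)
  have "yta_formula q u M (rem_box lam s) * (u / q ^ M * col_prob q M (rem_box lam s) s) * R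
      = u * yta_formula q u M (rem_box lam s)
        * ((q ^ (M - (y - 1)) - q ^ (M - x)) / q ^ M * R) / (q ^ M - 1)"
    using col_prob_rem_box[OF lam s M] by (simp add: x_def y_def)
  also have "\<dots> = u * yta_formula q u M (rem_box lam s) * (1 - 1 / q ^ (x - y + 1)) * (q ^ y - q ^ z) / (q ^ M - 1)"
    using rem_box_weight_identity[of q z y x M] q zy \<open>y \<le> x\<close> \<open>x \<le> M\<close> by (simp add: R_def)
  also have "\<dots> = yta_formula q u M lam * (q ^ y - q ^ z) / (q ^ M - 1) * R"
    using yta_formula_rem_box_ratio[OF lam s q M, of u] by (simp add: R_def x_def y_def z_def)
  finally show ?thesis
    using \<open>R \<noteq> 0\<close> unfolding y_def z_def by (rule mult_right_cancel[THEN iffD1, rotated])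
qed

section \<open>The balance equation\<close>

lemma yta_formula_inflow:
  assumes lam: "is_partition lam" and size: "size_part lam = Suc n" and q: "1 < q"
  shows "(\<Sum>v\<in>partitions n. yta_formula q u M v * heads_walk q u M 1 v lam)
    = yta_formula q u M lam * (q ^ conj_part lam 1 - 1) / (q ^ M - 1)"
proof -
  let ?G = "\<lambda>v s. yta_formula q u M v * (u / q ^ M * col_prob q M v s)"
  let ?S = "{1..Suc n}"
  have "(\<Sum>v\<in>partitions n. yta_formula q u M v * heads_walk q u M 1 v lam)
      = (\<Sum>v\<in>partitions n. \<Sum>s\<in>?S. if addable v s \<and> add_box v s = lam then ?G v s else 0)"
  proof (intro sum.cong refl)
    fix v assume "v \<in> partitions n"
    then have v: "is_partition v" "size_part v = n" by (auto simp: partitions_def)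
    show "yta_formula q u M v * heads_walk q u M 1 v lam
      = (\<Sum>s\<in>?S. if addable v s \<and> add_box v s = lam then ?G v s else 0)"
      unfolding heads_walk_1[OF v] sum_distrib_left by (intro sum.cong) auto
  qed
  also have "\<dots> = (\<Sum>s\<in>?S. if corner lam s then ?G (rem_box lam s) s else 0)"
    by (subst sum.swap) (simp add: sum_partitions_add_box[OF lam size])
  also have "\<dots> = (\<Sum>s\<in>?S. yta_formula q u M lam / (q ^ M - 1)
      * (q ^ conj_part lam s - q ^ conj_part lam (Suc s)))"
  proof (intro sum.cong refl)
    fix s assume "s \<in> ?S"
    moreover have "conj_part lam (Suc s) \<le> conj_part lam s" by (rule conj_part_antimono) simp
    ultimately show "(if corner lam s then ?G (rem_box lam s) s else 0) = yta_formula q u M lam / (q ^ M - 1)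
      * (q ^ conj_part lam s - q ^ conj_part lam (Suc s))"
      using yta_formula_rem_box[OF lam _ q] by (auto simp: corner_def)
  qed
  also have "\<dots> = yta_formula q u M lam / (q ^ M - 1)
      * (\<Sum>s\<in>?S. q ^ conj_part lam s - q ^ conj_part lam (Suc s))"
    by (simp only: sum_distrib_left)
  also have "(\<Sum>s\<in>?S. q ^ conj_part lam s - q ^ conj_part lam (Suc s))
      = q ^ conj_part lam 1 - q ^ conj_part lam (Suc (Suc n))"
    using sum_Suc_diff[of 1 "Suc n" "\<lambda>s. - (q ^ conj_part lam s)"] by simp
  also have "conj_part lam (Suc (Suc n)) = 0"
    using conj_part_eq_0_iff[OF lam] first_part_le_size[of lam] size by simp
  finally show ?thesis by simp
qed

lemma yta_formula_balance:
  assumes lam: "is_partition lam" and size: "size_part lam = Suc n" and q: "1 < q"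
  shows "yta_formula q u (Suc N) lam = (1 - u / q ^ Suc N) * yta_formula q u N lam
    + (\<Sum>v\<in>partitions n. yta_formula q u (Suc N) v * heads_walk q u (Suc N) 1 v lam)"
proof -
  define F Q C where "F = yta_formula q u (Suc N) lam" and "Q = q ^ Suc N" and "C = q ^ conj_part lam 1"
  have "Q - 1 \<noteq> 0" using one_less_power[OF q, of "Suc N"] by (simp add: Q_def)
  have "F * (Q - C) / (Q - 1) + F * (C - 1) / (Q - 1) = F * (Q - 1) / (Q - 1)"
    unfolding add_divide_distrib[symmetric] by (simp add: algebra_simps)
  also have "\<dots> = F" using \<open>Q - 1 \<noteq> 0\<close> by simp
  finally have "F = F * (Q - C) / (Q - 1) + F * (C - 1) / (Q - 1)" ..
  then show ?thesis
    unfolding yta_formula_stay[OF lam q] yta_formula_inflow[OF lam size q] F_def Q_def C_def .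
qed

section \<open>Distribution at the end of an interval\<close>

(* The probability that the walk of interval N+1 passes through lam,
   given that interval N ended with distribution yta_formula q u N. *)
definition visit_weight :: "real \<Rightarrow> real \<Rightarrow> nat \<Rightarrow> nat list \<Rightarrow> real" where
  "visit_weight q u N lam = (\<Sum>mu\<in>partitions_le (size_part lam).
     yta_formula q u N mu * heads_walk q u (Suc N) (size_part lam - size_part mu) mu lam)"

lemma visit_weight_Suc:
  assumes lam: "is_partition lam" and size: "size_part lam = Suc n"
  shows "visit_weight q u N lam = yta_formula q u N lam
    + (\<Sum>v\<in>partitions n. visit_weight q u N v * heads_walk q u (Suc N) 1 v lam)"
proof -
  let ?h = "heads_walk q u (Suc N)"
  let ?F = "yta_formula q u N"
  have "partitions_le (Suc n) = partitions (Suc n) \<union> partitions_le n"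
    and "partitions (Suc n) \<inter> partitions_le n = {}"
    by (auto simp: partitions_le_def partitions_def)
  then have "visit_weight q u N lam = (\<Sum>mu\<in>partitions (Suc n). ?F mu * ?h (Suc n - size_part mu) mu lam)
      + (\<Sum>mu\<in>partitions_le n. ?F mu * ?h (Suc n - size_part mu) mu lam)"
    unfolding visit_weight_def size using finite_partitions finite_partitions_le
    by (simp add: sum.union_disjoint)
  also have "(\<Sum>mu\<in>partitions (Suc n). ?F mu * ?h (Suc n - size_part mu) mu lam) = ?F lam"
  proof -
    have "(\<Sum>mu\<in>partitions (Suc n). ?F mu * ?h (Suc n - size_part mu) mu lam)
        = (\<Sum>mu\<in>partitions (Suc n). if mu = lam then ?F mu else 0)"
      by (intro sum.cong) (auto simp: partitions_def)
    then show ?thesis using lam size finite_partitions[of "Suc n"] by (simp add: partitions_def)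
  qed
  also have "(\<Sum>mu\<in>partitions_le n. ?F mu * ?h (Suc n - size_part mu) mu lam)
      = (\<Sum>mu\<in>partitions_le n. \<Sum>v\<in>partitions n. ?F mu * ?h (n - size_part mu) mu v * ?h 1 v lam)"
  proof (intro sum.cong refl)
    fix mu assume "mu \<in> partitions_le n"
    then have mu: "is_partition mu" and "size_part mu \<le> n" by (auto simp: partitions_le_def)
    then have "Suc n - size_part mu = Suc (n - size_part mu)" by simp
    then show "?F mu * ?h (Suc n - size_part mu) mu lam
        = (\<Sum>v\<in>partitions n. ?F mu * ?h (n - size_part mu) mu v * ?h 1 v lam)"
      using heads_walk_Suc_last[OF mu, of q u "Suc N" "n - size_part mu" lam] \<open>size_part mu \<le> n\<close>
      by (simp add: sum_distrib_left mult.assoc)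
  qed
  also have "\<dots> = (\<Sum>v\<in>partitions n. visit_weight q u N v * ?h 1 v lam)"
    by (subst sum.swap) (auto simp: visit_weight_def partitions_def sum_distrib_right intro!: sum.cong)
  finally show ?thesis .
qed

lemma visit_weight_eq:
  assumes q: "1 < q" and lam: "is_partition lam"
  shows "(1 - u / q ^ Suc N) * visit_weight q u N lam = yta_formula q u (Suc N) lam"
  using lam
proof (induction "size_part lam" arbitrary: lam)
  case 0
  then have "lam = []" using partition_size_0 by simp
  moreover have "partitions_le 0 = {[]}"
    using partition_size_0 by (auto simp: partitions_le_def is_partition_def size_part_def)
  moreover have "q ^ Suc N - 1 \<noteq> 0" using one_less_power[OF q, of "Suc N"] by simp
  ultimately show ?case
    using yta_formula_stay[of "[]" q u N] q by (simp add: visit_weight_def size_part_def is_partition_def)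
next
  case (Suc n)
  let ?a = "u / q ^ Suc N"
  have "(1 - ?a) * visit_weight q u N lam = (1 - ?a) * yta_formula q u N lam
      + (\<Sum>v\<in>partitions n. ((1 - ?a) * visit_weight q u N v) * heads_walk q u (Suc N) 1 v lam)"
    using visit_weight_Suc[OF Suc.prems Suc.hyps(2)[symmetric]]
    by (simp add: algebra_simps sum_distrib_left)
  also have "\<dots> = (1 - ?a) * yta_formula q u N lam
      + (\<Sum>v\<in>partitions n. yta_formula q u (Suc N) v * heads_walk q u (Suc N) 1 v lam)"
    using Suc.hyps(1) by (auto simp: partitions_def intro!: sum.cong)
  also have "\<dots> = yta_formula q u (Suc N) lam"
    using yta_formula_balance[OF Suc.prems Suc.hyps(2)[symmetric] q] by simp
  finally show ?case .
qed

lemma yta_dist_eq_formula: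
  assumes q: "1 < q"
  shows "is_partition lam \<Longrightarrow> yta_dist q u N lam = yta_formula q u N lam"
proof (induction N arbitrary: lam)
  case 0
  then show ?case by (cases lam) (auto simp: yta_formula_def first_part_def size_part_def)
next
  case (Suc N)
  have "yta_dist q u (Suc N) lam
      = (\<Sum>mu\<in>partitions_le (size_part lam). yta_dist q u N mu * interval_kernel q u (Suc N) mu lam)"
    by (simp add: partitions_le_def)
  also have "\<dots> = (1 - u / q ^ Suc N) * visit_weight q u N lam"
    unfolding visit_weight_def sum_distrib_left
    by (intro sum.cong) (auto simp: partitions_le_def Suc.IH interval_kernel_eq)
  also have "\<dots> = yta_formula q u (Suc N) lam"
    by (rule visit_weight_eq[OF q Suc.prems])
  finally show ?case .
qed

theorem theorem4:
  fixes q u :: real and N :: nat and lam :: "nat list"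
  assumes "q > 1" and "0 < u" and "u < 1" and "is_partition lam"
  shows "yta_dist q u N lam =
    (if length lam > N then 0
     else u ^ size_part lam * qpoch q (u / q) N * qpoch q (1 / q) N
            / qpoch q (1 / q) (N - conj_part lam 1)
          * (\<Prod>i\<in>{1..first_part lam}.
               1 / (q ^ ((conj_part lam i)\<^sup>2) * qpoch q (1 / q) (mult_part lam i))))"
  (* 0 < u < 1 is only needed for the algorithm to be a probability model; the identity holds for all u. *)
  using yta_dist_eq_formula[OF assms(1,4)] unfolding yta_formula_def .

end
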